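(* Let $q\ge 2$, $n\ge1$, $d\ge 2$ be integers and $\boldsymbol{x}\neq\boldsymbol{y}\in\Sigma_q^n$. Then $d_H(\mathcal{R}(\boldsymbol{x}),\mathcal{R}(\boldsymbol{y}))=d$ if and only if there exist integers $s\ge 0$ and $t_1,\dots,t_{s+1}\ge 1$, sequences $\boldsymbol{u},\boldsymbol{w},\boldsymbol{v}_1,\dots,\boldsymbol{v}_s\in\Sigma_q^{\ge0}$, and symbols $a_1,\dots,a_{s+1},b_1,\dots,b_{s+1}\in\Sigma_q$ with $a_i\ne b_i$ for all $i\in[1,s+1]$, such that $$\boldsymbol{x}=(\boldsymbol{u},(\boldsymbol{\alpha}_{t_1}(a_1b_1),\boldsymbol{v}_1),\dots,(\boldsymbol{\alpha}_{t_s}(a_sb_s),\boldsymbol{v}_s),\boldsymbol{\alpha}_{t_{s+1}}(a_{s+1}b_{s+1}),\boldsymbol{w}),$$ $$\boldsymbol{y}=(\boldsymbol{u},(\boldsymbol{\alpha}_{t_1}(b_1a_1),\boldsymbol{v}_1),\dots,(\boldsymbol{\alpha}_{t_s}(b_sa_s),\boldsymbol{v}_s),\boldsymbol{\alpha}_{t_{s+1}}(b_{s+1}a_{s+1}),\boldsymbol{w}),$$ and the following conditions hold: (i) for every $i\in[1,s]$ with $\boldsymbol{v}_i=\emptyset$, the multisets satisfy $\{\{\alpha_{t_i}(a_ib_i)[t_i],a_{i+1}\}\}\neq\{\{\alpha_{t_i}(b_ia_i)[t_i],b_{i+1}\}\}$; (ii) $d=2(s+1)-|\{i\in[1,s]: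\boldsymbol{v}_i=\emptyset\}|$.
   Context: $\Sigma_q=\{0,1,\dots,q-1\}$; $[i,j]=\{i,\dots,j\}$; $\Sigma_q^{\ge 0}$ is the set of all finite sequences over $\Sigma_q$, including the empty sequence $\emptyset$; $(\cdot,\cdot)$ denotes concatenation. For $\boldsymbol{x}\in\Sigma_q^n$, $x[i]$ is its $i$-th entry, with the convention $x[i]=0$ for $i\notin[1,n]$. The $2$-read vector of $\boldsymbol{x}$ is $\mathcal{R}(\boldsymbol{x})$, the vector of length $n+1$ whose $i$-th entry ($i\in[1,n+1]$) is the multiset $\{\{x[i-1],x[i]\}\}$. $d_H$ is Hamming distance. For distinct $a,b$ and $t\ge 0$, $\boldsymbol{\alpha}_t(ab)$ is the alternating sequence $abab\cdots$ of length $t$; $\alpha_t(ab)[t]$ denotes its last entry. *)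

theory Defs
  imports Main "HOL-Library.Multiset"
begin

text \<open>Sequences over Sigma_q are lists of naturals with all entries < q.
  Entry x[i] is 1-indexed, with x[i] = 0 outside [1,n].\<close>
definition entry :: "nat list \<Rightarrow> int \<Rightarrow> nat" where
  "entry x i = (if 1 \<le> i \<and> i \<le> int (length x) then x ! nat (i - 1) else 0)"

definition read2 :: "nat list \<Rightarrow> nat multiset list" where
  "read2 x = map (\<lambda>i. {# entry x (int i - 1), entry x (int i) #}) [1..<length x + 2]"

definition hamming :: "'a list \<Rightarrow> 'a list \<Rightarrow> nat" where
  "hamming xs ys = card {i. i < length xs \<and> i < length ys \<and> xs ! i \<noteq> ys ! i}"

definition alt :: "nat \<Rightarrow> nat \<Rightarrow> nat \<Rightarrow> nat list" where
  "alt t a b = map (\<lambda>i. if even i then a else b) [0..<t]"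

end

theory Submission
  imports Defs
begin

(* Reads of x and y agree wherever x and y agree locally, and inside a block alt t a b versus
  alt t b a they agree too, since {#a, b#} = {#b, a#}. So along a decomposition the differing
  reads are: the first read of the first block; for each gap v_i, the first read of the next
  block and, if v_i is nonempty, also the first read of v_i (for empty v_i the read entering the
  next block differs by condition (i)); and the read right after the last block, a read of w or
  of the final padding 0. That makes 2 (s + 1) - |{i. v_i = []}| reads.
  Conversely, any x ~= y of equal length decompose: strip the common prefix, take a maximal
  alternating block and recurse on the rest; maximality of each block gives condition (i). *)

lemma alt_Suc: "alt (Suc t) a b = a # alt t b a"
  unfolding alt_def upt_conv_Cons[OF zero_less_Suc] map_Suc_upt[symmetric]
  by (simp del: upt_Suc add: comp_def)

lemma length_alt [simp]: "length (alt t a b) = t"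
  by (simp add: alt_def)

lemma alt_0 [simp]: "alt 0 a b = []"
  by (simp add: alt_def)

lemma alt_eq_Nil_iff [simp]: "alt t a b = [] \<longleftrightarrow> t = 0"
  by (simp add: alt_def)

lemma hd_alt: "1 \<le> t \<Longrightarrow> hd (alt t a b) = a"
  by (cases t) (simp_all add: alt_Suc)

lemma last_alt: "1 \<le> t \<Longrightarrow> last (alt t a b) = (if even t then b else a)"
  by (induction t arbitrary: a b) (auto simp: alt_Suc)

lemma hamming_eq_length_filter:
  "hamming xs ys = length (filter (\<lambda>(x, y). x \<noteq> y) (zip xs ys))"
  unfolding hamming_def length_filter_conv_card by (rule arg_cong[where f = card]) auto

lemma hamming_self [simp]: "hamming xs xs = 0"
  by (simp add: hamming_def)

lemma hamming_Cons: "hamming (x # xs) (y # ys) = (if x = y then 0 else 1) + hamming xs ys"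
  by (simp add: hamming_eq_length_filter)

lemma hamming_append:
  "length xs = length ys \<Longrightarrow> hamming (xs @ xs') (ys @ ys') = hamming xs ys + hamming xs' ys'"
  by (simp add: hamming_eq_length_filter)

fun pair_reads :: "'a \<Rightarrow> 'a list \<Rightarrow> 'a multiset list" where
  "pair_reads p [] = []"
| "pair_reads p (x # xs) = {#p, x#} # pair_reads x xs"

lemma length_pair_reads [simp]: "length (pair_reads p xs) = length xs"
  by (induction xs arbitrary: p) auto

lemma nth_pair_reads: "k < length xs \<Longrightarrow> pair_reads p xs ! k = {#(p # xs) ! k, xs ! k#}"
  by (induction xs arbitrary: p k) (auto simp: nth_Cons split: nat.split)

lemma pair_reads_append: "pair_reads p (xs @ ys) = pair_reads p xs @ pair_reads (last (p # xs)) ys"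
  by (induction xs arbitrary: p) auto

lemma read2_eq_pair_reads: "read2 x = pair_reads 0 (x @ [0])"
proof (rule nth_equalityI)
  show "length (read2 x) = length (pair_reads 0 (x @ [0]))"
    by (simp add: read2_def del: upt_Suc)
next
  fix k assume "k < length (read2 x)"
  then have k: "k \<le> length x" by (simp add: read2_def del: upt_Suc)
  have "entry x (int k) = (0 # x @ [0]) ! k" "entry x (1 + int k) = (x @ [0]) ! k"
    using k by (auto simp: entry_def nth_Cons nth_append split: nat.split)
  then show "read2 x ! k = pair_reads 0 (x @ [0]) ! k"
    using k by (simp add: read2_def nth_pair_reads del: upt_Suc)
qed

lemma hamming_pair_reads_same:
  "hamming (pair_reads p xs) (pair_reads r xs) = (if p \<noteq> r \<and> xs \<noteq> [] then 1 else 0)"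
  by (cases xs) (auto simp: hamming_Cons add_mset_commute)

lemma hamming_pair_reads_alt_swapped:
  "hamming (pair_reads a (alt t b a)) (pair_reads b (alt t a b)) = 0"
  by (induction t arbitrary: a b) (auto simp: alt_Suc hamming_Cons add_mset_commute)

lemma hamming_pair_reads_alt:
  "1 \<le> t \<Longrightarrow>
    hamming (pair_reads p (alt t a b)) (pair_reads r (alt t b a)) = (if {#p, a#} = {#r, b#} then 0 else 1)"
  by (cases t) (simp_all add: alt_Suc hamming_Cons hamming_pair_reads_alt_swapped)

definition alt_chain ::
    "nat \<Rightarrow> (nat \<Rightarrow> nat) \<Rightarrow> (nat \<Rightarrow> nat list) \<Rightarrow> (nat \<Rightarrow> nat) \<Rightarrow> (nat \<Rightarrow> nat) \<Rightarrow> nat list" where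
  "alt_chain s t v a b =
     concat (map (\<lambda>i. alt (t i) (a i) (b i) @ v i) [1..<s+1]) @ alt (t (s+1)) (a (s+1)) (b (s+1))"

lemma alt_chain_0: "alt_chain 0 t v a b = alt (t 1) (a 1) (b 1)"
  by (simp add: alt_chain_def)

lemma alt_chain_Suc:
  "alt_chain (Suc s) t v a b = alt_chain s t v a b @ v (s+1) @ alt (t (s+2)) (a (s+2)) (b (s+2))"
  by (simp add: alt_chain_def)

lemma length_alt_chain_swap: "length (alt_chain s t v b a) = length (alt_chain s t v a b)"
  by (induction s) (simp_all add: alt_chain_0 alt_chain_Suc)

lemma last_alt_chain:
  "1 \<le> t (s+1) \<Longrightarrow> last (p # alt_chain s t v a b) = last (alt (t (s+1)) (a (s+1)) (b (s+1)))"
  by (simp add: alt_chain_def)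

lemma alt_chain_starts_with_alt: "\<exists>r. alt_chain s t v a b = alt (t 1) (a 1) (b 1) @ r"
  by (induction s) (auto simp: alt_chain_0 alt_chain_Suc)

lemma hamming_pair_reads_gap:
  assumes "l \<noteq> l'" "1 \<le> t" "a \<noteq> b" and "v = [] \<Longrightarrow> {#l, a#} \<noteq> {#l', b#}"
  shows "hamming (pair_reads l (v @ alt t a b)) (pair_reads l' (v @ alt t b a)) =
    (if v = [] then 1 else 2)"
  using assms
  by (simp add: pair_reads_append hamming_append hamming_pair_reads_same hamming_pair_reads_alt)

lemma hamming_pair_reads_alt_chain:
  assumes "\<forall>i\<in>{1..s+1}. 1 \<le> t i \<and> a i \<noteq> b i"
    and "\<forall>i\<in>{1..s}. v i = [] \<longrightarrow>
      {#last (alt (t i) (a i) (b i)), a (i+1)#} \<noteq> {#last (alt (t i) (b i) (a i)), b (i+1)#}"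
  shows "hamming (pair_reads p (alt_chain s t v a b)) (pair_reads p (alt_chain s t v b a))
           + card {i\<in>{1..s}. v i = []} = 2 * s + 1"
  using assms
proof (induction s)
  case 0
  then show ?case by (simp add: alt_chain_0 hamming_pair_reads_alt)
next
  case (Suc s)
  let ?l = "last (alt (t (s+1)) (a (s+1)) (b (s+1)))"
  let ?l' = "last (alt (t (s+1)) (b (s+1)) (a (s+1)))"
  have t: "1 \<le> t (s+1)" "a (s+1) \<noteq> b (s+1)" "1 \<le> t (s+2)" "a (s+2) \<noteq> b (s+2)"
    using Suc.prems(1) by auto
  have "?l \<noteq> ?l'"
    using t by (simp add: last_alt)
  moreover have "v (s+1) = [] \<Longrightarrow> {#?l, a (s+2)#} \<noteq> {#?l', b (s+2)#}"
    using Suc.prems(2)[rule_format, of "s+1"] by (simp add: numeral_2_eq_2)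
  ultimately have gap:
    "hamming (pair_reads ?l (v (s+1) @ alt (t (s+2)) (a (s+2)) (b (s+2))))
       (pair_reads ?l' (v (s+1) @ alt (t (s+2)) (b (s+2)) (a (s+2)))) = (if v (s+1) = [] then 1 else 2)"
    using t by (intro hamming_pair_reads_gap)
  have card: "card {i\<in>{1..Suc s}. v i = []} =
      card {i\<in>{1..s}. v i = []} + (if v (s+1) = [] then 1 else 0)"
  proof -
    have "{i\<in>{1..Suc s}. v i = []} =
        (if v (s+1) = [] then insert (s+1) {i\<in>{1..s}. v i = []} else {i\<in>{1..s}. v i = []})"
      by (auto simp: le_Suc_eq)
    then show ?thesis by simp
  qed
  have IH: "hamming (pair_reads p (alt_chain s t v a b)) (pair_reads p (alt_chain s t v b a))
           + card {i\<in>{1..s}. v i = []} = 2 * s + 1"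
    using Suc by auto
  have len:
    "length (pair_reads p (alt_chain s t v a b)) = length (pair_reads p (alt_chain s t v b a))"
    by (simp add: length_alt_chain_swap)
  show ?case
    unfolding alt_chain_Suc pair_reads_append[of p "alt_chain s t v a b"]
      pair_reads_append[of p "alt_chain s t v b a"] hamming_append[OF len]
      last_alt_chain[of t s, OF t(1)]
    using IH gap card by simp
qed

definition swap_decomposition :: "nat list \<Rightarrow> nat list \<Rightarrow> nat \<Rightarrow> (nat \<Rightarrow> nat) \<Rightarrow> nat list \<Rightarrow>
    nat list \<Rightarrow> (nat \<Rightarrow> nat list) \<Rightarrow> (nat \<Rightarrow> nat) \<Rightarrow> (nat \<Rightarrow> nat) \<Rightarrow> bool" where
  "swap_decomposition x y s t u w v a b \<longleftrightarrow>
     (\<forall>i\<in>{1..s+1}. 1 \<le> t i \<and> a i \<noteq> b i) \<and>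
     x = u @ alt_chain s t v a b @ w \<and> y = u @ alt_chain s t v b a @ w \<and>
     (\<forall>i\<in>{1..s}. v i = [] \<longrightarrow>
        {#last (alt (t i) (a i) (b i)), a (i+1)#} \<noteq> {#last (alt (t i) (b i) (a i)), b (i+1)#})"

lemma hamming_read2_swap_decomposition:
  assumes "swap_decomposition x y s t u w v a b"
  shows "hamming (read2 x) (read2 y) = 2 * (s + 1) - card {i\<in>{1..s}. v i = []}"
proof -
  have ab: "\<forall>i\<in>{1..s+1}. 1 \<le> t i \<and> a i \<noteq> b i"
    and x: "x = u @ alt_chain s t v a b @ w" and y: "y = u @ alt_chain s t v b a @ w"
    and gaps: "\<forall>i\<in>{1..s}. v i = [] \<longrightarrow>
        {#last (alt (t i) (a i) (b i)), a (i+1)#} \<noteq> {#last (alt (t i) (b i) (a i)), b (i+1)#}"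
    using assms unfolding swap_decomposition_def by blast+
  let ?p = "last (0 # u)"
  let ?C = "alt_chain s t v a b" and ?C' = "alt_chain s t v b a"
  have t: "1 \<le> t (s+1)" "a (s+1) \<noteq> b (s+1)"
    using ab by auto
  have ends_differ: "last (?p # ?C) \<noteq> last (?p # ?C')"
    unfolding last_alt_chain[of t s, OF t(1)] using t by (simp add: last_alt)
  have "hamming (read2 x) (read2 y) =
      hamming (pair_reads ?p ?C) (pair_reads ?p ?C')
      + hamming (pair_reads (last (?p # ?C)) (w @ [0])) (pair_reads (last (?p # ?C')) (w @ [0]))"
    unfolding x y read2_eq_pair_reads
    by (simp add: pair_reads_append hamming_append length_alt_chain_swap)
  also have "\<dots> = hamming (pair_reads ?p ?C) (pair_reads ?p ?C') + 1"
    using ends_differ by (simp add: hamming_pair_reads_same)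
  also have "\<dots> = 2 * (s + 1) - card {i\<in>{1..s}. v i = []}"
    using hamming_pair_reads_alt_chain[OF ab gaps, of ?p] by simp
  finally show ?thesis .
qed

lemma maximal_alt_prefix:
  "length xs = length ys \<Longrightarrow> \<exists>k xs' ys'. xs = alt k a b @ xs' \<and> ys = alt k b a @ ys' \<and>
     (xs' \<noteq> [] \<longrightarrow> \<not> (hd xs' = (if even k then a else b) \<and> hd ys' = (if even k then b else a)))"
proof (induction xs arbitrary: a b ys)
  case Nil
  then show ?case by simp
next
  case (Cons x xs)
  then obtain y ys' where ys: "ys = y # ys'" and len: "length xs = length ys'"
    by (cases ys) auto
  show ?case
  proof (cases "x = a \<and> y = b")
    case True
    obtain k xs' ys'' where "xs = alt k b a @ xs'" "ys' = alt k a b @ ys''"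
      "xs' \<noteq> [] \<longrightarrow> \<not> (hd xs' = (if even k then b else a) \<and> hd ys'' = (if even k then a else b))"
      using Cons.IH[OF len] by blast
    then show ?thesis
      using True ys by (intro exI[of _ "Suc k"]) (auto simp: alt_Suc)
  next
    case False
    then show ?thesis
      using ys by (intro exI[of _ 0]) simp
  qed
qed

definition seq_cons :: "'a \<Rightarrow> (nat \<Rightarrow> 'a) \<Rightarrow> nat \<Rightarrow> 'a" where
  "seq_cons z f i = (if i = 1 then z else f (i - 1))"

lemma alt_chain_seq_cons:
  "alt_chain (Suc s) (seq_cons k t) (seq_cons u v) (seq_cons c a) (seq_cons d b)
     = alt k c d @ u @ alt_chain s t v a b"
proof -
  have "[1..<Suc s+1] = 1 # map Suc [1..<s+1]"
    by (simp add: upt_conv_Cons map_Suc_upt del: upt_Suc)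
  moreover have "map (\<lambda>i. alt (seq_cons k t i) (seq_cons c a i) (seq_cons d b i) @ seq_cons u v i)
      (map Suc [1..<s+1]) = map (\<lambda>i. alt (t i) (a i) (b i) @ v i) [1..<s+1]"
    by (auto simp: seq_cons_def)
  ultimately show ?thesis
    unfolding alt_chain_def by (simp only: list.map concat.simps) (simp add: seq_cons_def)
qed

lemma swap_decomposition_hd:
  assumes "swap_decomposition x y s t [] w v a b"
  shows "hd x = a 1 \<and> hd y = b 1"
proof -
  obtain r r' where "x = alt (t 1) (a 1) (b 1) @ r" "y = alt (t 1) (b 1) (a 1) @ r'"
    using assms alt_chain_starts_with_alt[of s t v a b] alt_chain_starts_with_alt[of s t v b a]
    unfolding swap_decomposition_def by force
  moreover have "1 \<le> t 1"
    using assms by (simp add: swap_decomposition_def)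
  ultimately show ?thesis
    by (simp add: hd_alt)
qed

lemma add_mset_pair_eq_iff: "l \<noteq> l' \<Longrightarrow> {#l, a#} = {#l', b#} \<longleftrightarrow> a = l' \<and> b = l"
  by (auto simp: add_eq_conv_ex)

(* Stated with Suc 0 rather than 1, the simp normal form of the bounds it is used on. *)
lemma ball_atLeastAtMost_Suc_shift:
  "(\<forall>i\<in>{Suc 0..Suc m}. Q i) \<longleftrightarrow> Q (Suc 0) \<and> (\<forall>i\<in>{Suc 0..m}. Q (Suc i))"
proof -
  have "{Suc 0..Suc m} = insert (Suc 0) (Suc ` {Suc 0..m})"
    by (simp add: image_Suc_atLeastAtMost atLeastAtMost_insertL)
  then show ?thesis
    by (simp del: image_Suc_atLeastAtMost)
qed

lemma swap_decomposition_prepend_block: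
  assumes D: "swap_decomposition x y s t u w v a b" and k: "1 \<le> k" and "c \<noteq> d"
    and maximal: "\<not> (hd x = (if even k then c else d) \<and> hd y = (if even k then d else c))"
  shows "swap_decomposition (alt k c d @ x) (alt k d c @ y)
           (Suc s) (seq_cons k t) [] w (seq_cons u v) (seq_cons c a) (seq_cons d b)"
proof -
  have first_gap: "{#last (alt k c d), a 1#} \<noteq> {#last (alt k d c), b 1#}" if "u = []"
    using D maximal swap_decomposition_hd[of x y s t w v a b] that k \<open>c \<noteq> d\<close>
    by (auto simp: last_alt add_mset_pair_eq_iff)
  show ?thesis
    using D k \<open>c \<noteq> d\<close> first_gap
    unfolding swap_decomposition_def alt_chain_seq_cons
    by (simp add: seq_cons_def ball_atLeastAtMost_Suc_shift)
qed

lemma swap_decomposition_exists: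
  "length x = length y \<Longrightarrow> x \<noteq> y \<Longrightarrow> \<exists>s t u w v a b. swap_decomposition x y s t u w v a b"
proof (induction "length x" arbitrary: x y rule: less_induct)
  case less
  obtain c xs d ys where x: "x = c # xs" and y: "y = d # ys" and len: "length xs = length ys"
    using less.prems by (cases x; cases y) auto
  show ?case
  proof (cases "c = d")
    case True
    moreover have "xs \<noteq> ys"
      using less.prems x y True by simp
    ultimately obtain s t u w v a b where "swap_decomposition xs ys s t u w v a b"
      using less.hyps[of xs ys] x len by auto
    then have "swap_decomposition x y s t (c # u) w v a b"
      using x y \<open>c = d\<close> by (simp add: swap_decomposition_def)
    then show ?thesis by blast
  next
    case False
    obtain k xs' ys' where xs: "xs = alt k d c @ xs'" and ys: "ys = alt k c d @ ys'"
      and maximal: "xs' \<noteq> [] \<longrightarrow>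
        \<not> (hd xs' = (if even k then d else c) \<and> hd ys' = (if even k then c else d))"
      using maximal_alt_prefix[OF len] by blast
    have x': "x = alt (Suc k) c d @ xs'" and y': "y = alt (Suc k) d c @ ys'"
      using x y xs ys by (simp_all add: alt_Suc)
    show ?thesis
    proof (cases "xs' = ys'")
      case True
      have "swap_decomposition x y 0 (\<lambda>_. Suc k) [] xs' v (\<lambda>_. c) (\<lambda>_. d)" for v
        using False x' y' True by (simp add: swap_decomposition_def alt_chain_0)
      then show ?thesis by blast
    next
      case neq: False
      have len': "length xs' = length ys'" and shorter: "length xs' < length x"
        using len x xs ys by auto
      obtain s t u w v a b where D: "swap_decomposition xs' ys' s t u w v a b"
        using less.hyps[OF shorter len' neq] by blast
      have "xs' \<noteq> []"
        using len' neq by auto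
      then have "\<not> (hd xs' = (if even (Suc k) then c else d) \<and>
          hd ys' = (if even (Suc k) then d else c))"
        using maximal by (cases "even k") auto
      then have "swap_decomposition x y (Suc s)
          (seq_cons (Suc k) t) [] w (seq_cons u v) (seq_cons c a) (seq_cons d b)"
        unfolding x' y' using swap_decomposition_prepend_block[OF D _ False] by simp
      then show ?thesis by blast
    qed
  qed
qed

lemma swap_decomposition_symbols:
  assumes "swap_decomposition x y s t u w v a b"
  shows "set u \<subseteq> set x \<and> set w \<subseteq> set x \<and> (\<forall>i\<in>{1..s}. set (v i) \<subseteq> set x) \<and>
    (\<forall>i\<in>{1..s+1}. a i \<in> set x \<and> b i \<in> set y)"
proof -
  have blocks: "set (alt (t i) (a i) (b i)) \<union> set (v i) \<subseteq> set (alt_chain s t v a b)"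
    if "i \<in> {1..s}" for a b :: "nat \<Rightarrow> nat" and i
    using that by (force simp: alt_chain_def)
  have last_block: "set (alt (t (s+1)) (a (s+1)) (b (s+1))) \<subseteq> set (alt_chain s t v a b)"
    for a b :: "nat \<Rightarrow> nat"
    by (simp add: alt_chain_def)
  have "a i \<in> set (alt_chain s t v a b)" if "i \<in> {1..s+1}" "1 \<le> t i"
    for a b :: "nat \<Rightarrow> nat" and i
  proof -
    have "a i \<in> set (alt (t i) (a i) (b i))"
      using that(2) hd_in_set[of "alt (t i) (a i) (b i)"] by (simp add: hd_alt)
    then show ?thesis
      using that(1) blocks[of i a b] last_block[of a b] by (cases "i = s+1") auto
  qed
  then show ?thesis
    using assms blocks unfolding swap_decomposition_def by fastforce
qed

theorem theorem2:
  fixes q n d :: nat and x y :: "nat list"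
  assumes "q \<ge> 2" and "n \<ge> 1" and "d \<ge> 2"
    and "length x = n" and "length y = n"
    and "set x \<subseteq> {..<q}" and "set y \<subseteq> {..<q}"
    and "x \<noteq> y"
  shows "hamming (read2 x) (read2 y) = d \<longleftrightarrow>
    (\<exists>(s::nat) (t::nat \<Rightarrow> nat) (u::nat list) (w::nat list) (v::nat \<Rightarrow> nat list)
       (a::nat \<Rightarrow> nat) (b::nat \<Rightarrow> nat).
       (\<forall>i\<in>{1..s+1}. t i \<ge> 1) \<and>
       set u \<subseteq> {..<q} \<and> set w \<subseteq> {..<q} \<and> (\<forall>i\<in>{1..s}. set (v i) \<subseteq> {..<q}) \<and>
       (\<forall>i\<in>{1..s+1}. a i < q \<and> b i < q \<and> a i \<noteq> b i) \<and>
       x = u @ concat (map (\<lambda>i. alt (t i) (a i) (b i) @ v i) [1..<s+1])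
             @ alt (t (s+1)) (a (s+1)) (b (s+1)) @ w \<and>
       y = u @ concat (map (\<lambda>i. alt (t i) (b i) (a i) @ v i) [1..<s+1])
             @ alt (t (s+1)) (b (s+1)) (a (s+1)) @ w \<and>
       (\<forall>i\<in>{1..s}. v i = [] \<longrightarrow>
          {# last (alt (t i) (a i) (b i)), a (i+1) #} \<noteq> {# last (alt (t i) (b i) (a i)), b (i+1) #}) \<and>
       d = 2 * (s+1) - card {i\<in>{1..s}. v i = []})"
    (is "?H = d \<longleftrightarrow> (\<exists>s t u w v a b. ?P s t u w v a b)")
proof
  assume H: "?H = d"
  obtain s t u w v a b where D: "swap_decomposition x y s t u w v a b"
    using swap_decomposition_exists assms(4,5,8) by metis
  have "d = 2 * (s+1) - card {i\<in>{1..s}. v i = []}"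
    using H hamming_read2_swap_decomposition[OF D] by simp
  moreover have "set u \<subseteq> {..<q}" "set w \<subseteq> {..<q}" "\<forall>i\<in>{1..s}. set (v i) \<subseteq> {..<q}"
    "\<forall>i\<in>{1..s+1}. a i < q \<and> b i < q"
    using swap_decomposition_symbols[OF D] assms(6,7) by (meson lessThan_iff subset_iff)+
  ultimately have "?P s t u w v a b"
    using D unfolding swap_decomposition_def alt_chain_def append_assoc by blast
  then show "\<exists>s t u w v a b. ?P s t u w v a b" by blast
next
  assume "\<exists>s t u w v a b. ?P s t u w v a b"
  then obtain s t u w v a b where P: "?P s t u w v a b" by blast
  then have "swap_decomposition x y s t u w v a b"
    unfolding swap_decomposition_def alt_chain_def by (auto simp del: upt_Suc)
  with P show "?H = d"
    using hamming_read2_swap_decomposition by auto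
qed

end
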